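(* Assume $p$ is unbounded. Then for every fixed $n\ge 0$, as $r\to\infty$, $$\mathbf{P}\big[M_{[0,n]}=r\big]\sim (1+\mu+\cdots+\mu^n)\,p_r\quad\text{and}\quad \mathbf{P}\big[M_{[0,n]}>r\big]\sim(1+\mu+\cdots+\mu^n)\,\bar F(r),$$ where the first asymptotic equivalence is understood along the infinite set $\{r:p_r>0\}$.
   Context: Let $p=(p_0,p_1,p_2,\dots)$ be a probability distribution on the nonnegative integers with mean $\mu=\sum_k kp_k\in(0,\infty)$, and let $\tau(p)$ be a Galton–Watson tree with offspring distribution $p$: it starts with a single root at generation $0$, and every vertex independently has $k$ children with probability $p_k$. The out-degree of a vertex is its number of children. $M_n$ denotes the maximal out-degree among the vertices of generation $n$ (with $M_n=0$ if generation $n$ is empty), and $M_{[0,n]}=\max_{0\le i\le n}M_i$ (the local maximal out-degree over the first $n+1$ generations). $\bar F(r)=\sum_{k>r}p_k$. The distribution $p$ is called unbounded if the set $\{r:p_r>0\}$ is unbounded. *)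

theory Defs
  imports "HOL-Probability.Probability" "HOL-Library.Landau_Symbols"
begin

text \<open>Ulam--Harris construction of a Galton--Watson tree: every potential vertex
  u (a finite word of child indices, the root being the empty word) carries an
  independent number of children omega u with law p.  The Galton--Watson tree is
  the set of words u such that each letter is smaller than the number of children
  of the corresponding ancestor.\<close>

definition GW :: "nat pmf \<Rightarrow> (nat list \<Rightarrow> nat) measure" where
  "GW p = PiM UNIV (\<lambda>_. measure_pmf p)"

definition in_tree :: "(nat list \<Rightarrow> nat) \<Rightarrow> nat list \<Rightarrow> bool" where
  "in_tree \<omega> u \<longleftrightarrow> (\<forall>j < length u. u ! j < \<omega> (take j u))"

definition generation :: "(nat list \<Rightarrow> nat) \<Rightarrow> nat \<Rightarrow> nat list set" where
  "generation \<omega> k = {u. length u = k \<and> in_tree \<omega> u}"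

definition maxdeg :: "(nat list \<Rightarrow> nat) \<Rightarrow> nat \<Rightarrow> nat" where
  "maxdeg \<omega> k = (if generation \<omega> k = {} then 0 else Max (\<omega> ` generation \<omega> k))"

definition maxdeg_upto :: "(nat list \<Rightarrow> nat) \<Rightarrow> nat \<Rightarrow> nat" where
  "maxdeg_upto \<omega> n = Max ((\<lambda>i. maxdeg \<omega> i) ` {..n})"

end

theory Submission
  imports Defs
begin

text \<open>
  Let \<open>q n r = P[M[0,n] \<le> r]\<close> and let \<open>T r = P[X > r]\<close> be the offspring tail.  Given the
  root degree, the subtrees of the root are independent copies of the whole tree, so
  \<open>q (n+1) r = \<Sum>k\<le>r. p k * q n r ^ k\<close> and \<open>q 0 r = \<Sum>k\<le>r. p k\<close>.  Writing \<open>q n r = 1 - b\<close>,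
  the bounds \<open>k b - k\<^sup>2 b\<^sup>2 \<le> 1 - (1 - b)^k \<le> k b\<close> give
  \<open>1 - q (n+1) r = T r + b (\<mu> + o(1))\<close>, because integrability forces \<open>r T r \<rightarrow> 0\<close> and
  hence \<open>r b \<rightarrow> 0\<close>; induction on n yields \<open>1 - q n r \<sim> (1 + \<mu> + \<dots> + \<mu>^n) T r\<close>.  The same
  expansion applied to the increments \<open>q n r - q n (r - 1)\<close>, divided by \<open>p r\<close>, gives the
  point asymptotics along \<open>{r. p r > 0}\<close>.
\<close>

section \<open>Subtrees of the root\<close>

definition subtree :: "nat \<Rightarrow> (nat list \<Rightarrow> nat) \<Rightarrow> nat list \<Rightarrow> nat" where
  "subtree i \<omega> = (\<lambda>u. \<omega> (i # u))"

lemma in_tree_Nil [simp]: "in_tree \<omega> []"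
  by (simp add: in_tree_def)

lemma in_tree_Cons: "in_tree \<omega> (i # u) \<longleftrightarrow> i < \<omega> [] \<and> in_tree (subtree i \<omega>) u"
proof -
  have "in_tree \<omega> (i # u) \<longleftrightarrow> (\<forall>j < Suc (length u). (i # u) ! j < \<omega> (take j (i # u)))"
    by (simp add: in_tree_def)
  also have "\<dots> \<longleftrightarrow> i < \<omega> [] \<and> (\<forall>j < length u. u ! j < \<omega> (i # take j u))"
    by (auto simp: less_Suc_eq_0_disj)
  finally show ?thesis by (simp add: in_tree_def subtree_def)
qed

lemma generation_Suc:
  "generation \<omega> (Suc k) = (\<Union>i<\<omega> []. Cons i ` generation (subtree i \<omega>) k)"
  by (auto simp: generation_def in_tree_Cons length_Suc_conv)

lemma finite_generation: "finite (generation \<omega> k)"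
proof (induction k arbitrary: \<omega>)
  case 0
  have "generation \<omega> 0 = {[]}" by (auto simp: generation_def)
  then show ?case by simp
qed (simp add: generation_Suc)

definition degrees_bounded :: "(nat list \<Rightarrow> nat) \<Rightarrow> nat \<Rightarrow> nat \<Rightarrow> bool" where
  "degrees_bounded \<omega> n r \<longleftrightarrow> (\<forall>u. length u \<le> n \<and> in_tree \<omega> u \<longrightarrow> \<omega> u \<le> r)"

lemma maxdeg_upto_le_iff: "maxdeg_upto \<omega> n \<le> r \<longleftrightarrow> degrees_bounded \<omega> n r"
proof -
  have "maxdeg \<omega> i \<le> r \<longleftrightarrow> (\<forall>u\<in>generation \<omega> i. \<omega> u \<le> r)" for i
    using finite_generation[of \<omega> i] by (auto simp: maxdeg_def)
  then show ?thesis
    by (auto simp: maxdeg_upto_def degrees_bounded_def generation_def)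
qed

lemma degrees_bounded_0: "degrees_bounded \<omega> 0 r \<longleftrightarrow> \<omega> [] \<le> r"
  by (auto simp: degrees_bounded_def)

lemma degrees_bounded_Suc:
  "degrees_bounded \<omega> (Suc n) r \<longleftrightarrow> \<omega> [] \<le> r \<and> (\<forall>i<\<omega> []. degrees_bounded (subtree i \<omega>) n r)"
  unfolding degrees_bounded_def
proof (intro iffI conjI allI impI)
  fix u assume "\<omega> [] \<le> r \<and> (\<forall>i<\<omega> []. \<forall>v. length v \<le> n \<and> in_tree (subtree i \<omega>) v \<longrightarrow> subtree i \<omega> v \<le> r)"
    and "length u \<le> Suc n \<and> in_tree \<omega> u"
  then show "\<omega> u \<le> r"
    by (cases u) (auto simp: in_tree_Cons subtree_def)
qed (force simp: in_tree_Cons subtree_def)+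

lemma degrees_bounded_mono: "degrees_bounded \<omega> n r \<Longrightarrow> r \<le> s \<Longrightarrow> degrees_bounded \<omega> n s"
  by (auto simp: degrees_bounded_def intro: le_trans)

section \<open>The Galton--Watson measure and the recursion for the maximal degree\<close>

lemma space_GW [simp]: "space (GW p) = UNIV"
  by (simp add: GW_def space_PiM)

lemma prob_space_GW: "prob_space (GW p)"
  unfolding GW_def by (rule prob_space_PiM) (rule prob_space_measure_pmf)

lemma measurable_GW_coordinate [measurable]: "(\<lambda>\<omega>. \<omega> u) \<in> measurable (GW p) (measure_pmf p)"
  unfolding GW_def by (rule measurable_component_singleton) simp

lemma measurable_subtree [measurable]: "subtree i \<in> measurable (GW p) (GW p)"
  unfolding GW_def subtree_def
  by (rule measurable_PiM_single') (auto intro: measurable_component_singleton)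

lemma sets_root_subtrees:
  assumes "S \<in> sets (GW p)"
  shows "{\<omega>. \<omega> [] = k \<and> (\<forall>i<k. subtree i \<omega> \<in> S)} \<in> sets (GW p)"
proof -
  have "Measurable.pred (GW p) (\<lambda>\<omega>. \<omega> [] = k \<and> (\<forall>i<k. subtree i \<omega> \<in> S))"
    using assms by measurable
  then show ?thesis by (simp add: pred_def)
qed

lemma sets_degrees_bounded: "{\<omega>. degrees_bounded \<omega> n r} \<in> sets (GW p)"
proof (induction n)
  case 0
  have "Measurable.pred (GW p) (\<lambda>\<omega>. \<omega> [] \<le> r)" by measurable
  then show ?case by (simp add: pred_def degrees_bounded_0)
next
  case (Suc n)
  have "{\<omega>. degrees_bounded \<omega> (Suc n) r} =
      (\<Union>k\<le>r. {\<omega>. \<omega> [] = k \<and> (\<forall>i<k. subtree i \<omega> \<in> {\<omega>. degrees_bounded \<omega> n r})})"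
    by (auto simp: degrees_bounded_Suc)
  then show ?case using sets_root_subtrees[OF Suc] by auto
qed

lemma measure_subtree:
  assumes "S \<in> sets (GW p)"
  shows "measure (GW p) (subtree i -` S) = measure (GW p) S"
proof -
  have "distr (GW p) (GW p) (subtree i) = GW p"
  proof -
    have "distr (PiM UNIV (\<lambda>_::nat list. measure_pmf p)) (PiM UNIV (\<lambda>_. measure_pmf p))
        (\<lambda>\<omega>. \<lambda>u\<in>UNIV. \<omega> (i # u)) = PiM UNIV (\<lambda>_. measure_pmf p)"
      by (rule distr_PiM_reindex) (auto intro: prob_space_measure_pmf)
    moreover have "(\<lambda>\<omega>. \<lambda>u\<in>UNIV. \<omega> (i # u)) = subtree i"
      by (auto simp: subtree_def fun_eq_iff)
    ultimately show ?thesis by (simp add: GW_def)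
  qed
  then show ?thesis
    using measure_distr[OF measurable_subtree assms, of i] by simp
qed

lemma measure_GW_root: "measure (GW p) {\<omega>. \<omega> [] \<in> A} = measure_pmf.prob p A"
proof -
  interpret product_prob_space "\<lambda>_::nat list. measure_pmf p" UNIV
    by unfold_locales
  have "emeasure (GW p) {\<omega> \<in> space (GW p). \<omega> [] \<in> A} = emeasure (measure_pmf p) A"
    unfolding GW_def by (rule emeasure_PiM_Collect_single) auto
  then show ?thesis by (simp add: measure_def)
qed

lemma indep_vars_GW_coordinates:
  "prob_space.indep_vars (GW p) (\<lambda>_. measure_pmf p) (\<lambda>u \<omega>. \<omega> u) UNIV"
proof -
  interpret prob_space "GW p" by (rule prob_space_GW)
  have "distr (GW p) (PiM UNIV (\<lambda>_. measure_pmf p)) (\<lambda>\<omega>. \<lambda>u\<in>UNIV. \<omega> u) = GW p"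
    by (simp add: GW_def distr_id2 restrict_UNIV)
  also have "\<dots> = PiM UNIV (\<lambda>u. distr (GW p) (measure_pmf p) (\<lambda>\<omega>. \<omega> u))"
    unfolding GW_def
    by (intro PiM_cong refl distr_PiM_component[symmetric]) (auto intro: prob_space_measure_pmf)
  finally have distr_eq: "distr (GW p) (PiM UNIV (\<lambda>_. measure_pmf p)) (\<lambda>\<omega>. \<lambda>u\<in>UNIV. \<omega> u) =
      PiM UNIV (\<lambda>u. distr (GW p) (measure_pmf p) (\<lambda>\<omega>. \<omega> u))" .
  show ?thesis
  proof (subst indep_vars_iff_distr_eq_PiM)
    show "random_variable (measure_pmf p) (\<lambda>\<omega>. \<omega> u)" for u
      by (rule measurable_GW_coordinate)
  qed (use distr_eq in simp_all)
qed

lemma measure_root_subtrees: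
  assumes S: "S \<in> sets (GW p)"
  shows "measure (GW p) {\<omega>. \<omega> [] = k \<and> (\<forall>i<k. subtree i \<omega> \<in> S)} = pmf p k * measure (GW p) S ^ k"
proof -
  interpret prob_space "GW p" by (rule prob_space_GW)
  define M where "M = (\<lambda>_::nat list. measure_pmf p)"
  \<comment> \<open>Index \<open>None\<close> stands for the root coordinate and \<open>Some i\<close> for the coordinates of the
    \<open>i\<close>-th subtree; these index sets are disjoint, so the restrictions are independent.\<close>
  define K where "K j = (case j of None \<Rightarrow> {[]} | Some i \<Rightarrow> range (Cons i))" for j :: "nat option"
  define A where "A j = (case j of
      None \<Rightarrow> {f \<in> space (PiM (K j) M). f [] = k}
    | Some i \<Rightarrow> {f \<in> space (PiM (K j) M). (\<lambda>u. f (i # u)) \<in> S})" for j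
  define J where "J = insert None (Some ` {..<k})"
  have indep: "indep_vars (\<lambda>j. PiM (K j) M) (\<lambda>j \<omega>. restrict \<omega> (K j)) UNIV"
    unfolding M_def
    by (rule indep_vars_restrict[OF indep_vars_GW_coordinates])
      (auto simp: K_def disjoint_family_on_def split: option.splits)
  have sets_A: "A j \<in> sets (PiM (K j) M)" for j
  proof (cases j)
    case None
    have "Measurable.pred (PiM (K j) M) (\<lambda>f. f [] = k)"
      using None by (auto simp: K_def M_def)
    then show ?thesis using None by (simp add: A_def pred_def)
  next
    case (Some i)
    have "(\<lambda>f u. f (i # u)) \<in> measurable (PiM (K j) M) (GW p)"
      unfolding GW_def using Some
      by (intro measurable_PiM_single') (auto simp: K_def M_def intro!: measurable_component_singleton)
    then show ?thesis using Some measurable_sets[OF _ S] by (simp add: A_def Collect_conj_eq Int_commute vimage_def)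
  qed
  have preimage: "(\<lambda>\<omega>. restrict \<omega> (K j)) -` A j \<inter> space (GW p) =
      (case j of None \<Rightarrow> {\<omega>. \<omega> [] \<in> {k}} | Some i \<Rightarrow> subtree i -` S)" for j
    by (cases j) (auto simp: A_def K_def M_def subtree_def space_PiM)
  have root: "prob {\<omega>. \<omega> [] = k} = pmf p k"
    using measure_GW_root[of p "{k}"] by (simp add: measure_pmf_single)
  have "{\<omega>. \<omega> [] = k \<and> (\<forall>i<k. subtree i \<omega> \<in> S)} =
      (\<Inter>j\<in>J. (\<lambda>\<omega>. restrict \<omega> (K j)) -` A j \<inter> space (GW p))"
    unfolding preimage by (auto simp: J_def)
  then have "prob {\<omega>. \<omega> [] = k \<and> (\<forall>i<k. subtree i \<omega> \<in> S)} =
      (\<Prod>j\<in>J. prob ((\<lambda>\<omega>. restrict \<omega> (K j)) -` A j \<inter> space (GW p)))"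
    using indep_varsD[OF indep, of J A] sets_A by (auto simp: J_def)
  also have "\<dots> = (\<Prod>j\<in>J. case j of None \<Rightarrow> pmf p k | Some i \<Rightarrow> prob S)"
    unfolding preimage
    by (intro prod.cong refl) (auto split: option.splits simp: root measure_subtree S)
  also have "\<dots> = pmf p k * prob S ^ k"
    unfolding J_def by (subst prod.insert) (auto simp: prod.reindex)
  finally show ?thesis .
qed

lemma measure_root_le_subtrees:
  assumes S: "S \<in> sets (GW p)"
  shows "measure (GW p) {\<omega>. \<omega> [] \<le> r \<and> (\<forall>i<\<omega> []. subtree i \<omega> \<in> S)} =
    (\<Sum>k\<le>r. pmf p k * measure (GW p) S ^ k)"
proof -
  interpret prob_space "GW p" by (rule prob_space_GW)
  have "{\<omega>. \<omega> [] \<le> r \<and> (\<forall>i<\<omega> []. subtree i \<omega> \<in> S)} =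
      (\<Union>k\<le>r. {\<omega>. \<omega> [] = k \<and> (\<forall>i<k. subtree i \<omega> \<in> S)})"
    by auto
  also have "prob \<dots> = (\<Sum>k\<le>r. prob {\<omega>. \<omega> [] = k \<and> (\<forall>i<k. subtree i \<omega> \<in> S)})"
    using sets_root_subtrees[OF S] by (intro finite_measure_finite_Union) (auto simp: disjoint_family_on_def)
  finally show ?thesis
    by (simp add: measure_root_subtrees[OF S])
qed

definition maxdeg_upto_cdf :: "nat pmf \<Rightarrow> nat \<Rightarrow> nat \<Rightarrow> real" where
  "maxdeg_upto_cdf p n r = measure (GW p) {\<omega>. maxdeg_upto \<omega> n \<le> r}"

lemma maxdeg_upto_cdf_eq: "maxdeg_upto_cdf p n r = measure (GW p) {\<omega>. degrees_bounded \<omega> n r}"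
  by (simp add: maxdeg_upto_cdf_def maxdeg_upto_le_iff)

lemma maxdeg_upto_cdf_0: "maxdeg_upto_cdf p 0 r = (\<Sum>k\<le>r. pmf p k)"
  using measure_root_le_subtrees[of UNIV p r] prob_space.prob_space[OF prob_space_GW]
  by (simp add: maxdeg_upto_cdf_eq degrees_bounded_0 sets.top[of "GW p", simplified])

lemma maxdeg_upto_cdf_Suc:
  "maxdeg_upto_cdf p (Suc n) r = (\<Sum>k\<le>r. pmf p k * maxdeg_upto_cdf p n r ^ k)"
  using measure_root_le_subtrees[OF sets_degrees_bounded[where p = p and n = n and r = r], of r]
  by (simp add: maxdeg_upto_cdf_eq degrees_bounded_Suc)

lemma maxdeg_upto_cdf_nonneg: "0 \<le> maxdeg_upto_cdf p n r"
  by (simp add: maxdeg_upto_cdf_def)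

lemma maxdeg_upto_cdf_le_1: "maxdeg_upto_cdf p n r \<le> 1"
  by (simp add: maxdeg_upto_cdf_def prob_space.prob_le_1[OF prob_space_GW])

lemma maxdeg_upto_cdf_mono: "r \<le> s \<Longrightarrow> maxdeg_upto_cdf p n r \<le> maxdeg_upto_cdf p n s"
  unfolding maxdeg_upto_cdf_eq
  by (intro finite_measure.finite_measure_mono[OF prob_space.finite_measure[OF prob_space_GW]]
      sets_degrees_bounded) (auto intro: degrees_bounded_mono)

lemma prob_maxdeg_upto_gt:
  "measure (GW p) {\<omega>. r < maxdeg_upto \<omega> n} = 1 - maxdeg_upto_cdf p n r"
proof -
  interpret prob_space "GW p" by (rule prob_space_GW)
  have "{\<omega>. r < maxdeg_upto \<omega> n} = space (GW p) - {\<omega>. degrees_bounded \<omega> n r}"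
    by (auto simp: maxdeg_upto_le_iff[symmetric])
  then show ?thesis
    using prob_compl[OF sets_degrees_bounded] by (simp add: maxdeg_upto_cdf_eq)
qed

lemma prob_maxdeg_upto_eq:
  "measure (GW p) {\<omega>. maxdeg_upto \<omega> n = Suc r} =
    maxdeg_upto_cdf p n (Suc r) - maxdeg_upto_cdf p n r"
proof -
  interpret prob_space "GW p" by (rule prob_space_GW)
  have "{\<omega>. maxdeg_upto \<omega> n = Suc r} =
      {\<omega>. degrees_bounded \<omega> n (Suc r)} - {\<omega>. degrees_bounded \<omega> n r}"
    by (auto simp: maxdeg_upto_le_iff[symmetric])
  moreover have "{\<omega>. degrees_bounded \<omega> n r} \<subseteq> {\<omega>. degrees_bounded \<omega> n (Suc r)}"
    by (auto intro: degrees_bounded_mono)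
  ultimately show ?thesis
    by (simp add: finite_measure_Diff sets_degrees_bounded maxdeg_upto_cdf_eq)
qed

section \<open>Asymptotics\<close>

lemma power_diff_le:
  fixes x y :: real
  assumes "0 \<le> y" "y \<le> x" "x \<le> 1"
  shows "x ^ k - y ^ k \<le> real k * (x - y)"
proof -
  have "x ^ k - y ^ k = (x - y) * (\<Sum>i<k. y ^ (k - Suc i) * x ^ i)"
    by (rule power_diff_sumr2)
  also have "\<dots> \<le> (x - y) * (\<Sum>i<k. 1)"
    using assms by (intro mult_left_mono sum_mono mult_le_one power_le_one) auto
  finally show ?thesis by (simp add: mult.commute)
qed

lemma power_diff_ge:
  fixes x y :: real
  assumes "0 \<le> y" "y \<le> x" "x \<le> 1"
  shows "real k * (1 - real k * (1 - y)) * (x - y) \<le> x ^ k - y ^ k"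
proof -
  have "1 - real k * (1 - y) \<le> y ^ (k - 1)"
  proof (cases k)
    case (Suc j)
    have "1 + real j * (y - 1) \<le> (1 + (y - 1)) ^ j"
      by (rule Bernoulli_inequality) (use assms in simp)
    then show ?thesis using Suc assms by (auto simp: algebra_simps)
  qed (use assms in simp)
  moreover have "y ^ (k - 1) \<le> y ^ (k - Suc i) * x ^ i" if "i < k" for i
  proof -
    have "y ^ (k - 1) = y ^ (k - Suc i) * y ^ i"
      using that by (simp flip: power_add)
    also have "\<dots> \<le> y ^ (k - Suc i) * x ^ i"
      using assms by (intro mult_left_mono power_mono) auto
    finally show ?thesis .
  qed
  then have "real k * y ^ (k - 1) \<le> (\<Sum>i<k. y ^ (k - Suc i) * x ^ i)"
    using sum_mono[of "{..<k}" "\<lambda>_. y ^ (k - 1)"] by simp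
  ultimately have "real k * (1 - real k * (1 - y)) \<le> (\<Sum>i<k. y ^ (k - Suc i) * x ^ i)"
    using mult_left_mono[of "1 - real k * (1 - y)" "y ^ (k - 1)" "real k"] by linarith
  then have "real k * (1 - real k * (1 - y)) * (x - y) \<le> (\<Sum>i<k. y ^ (k - Suc i) * x ^ i) * (x - y)"
    using assms by (intro mult_right_mono) auto
  then show ?thesis
    by (simp add: power_diff_sumr2 mult.commute)
qed

lemma filterlim_sequentially_pred:
  "filterlim (\<lambda>r. f (r - 1)) F sequentially \<longleftrightarrow> filterlim f F sequentially"
  using filterlim_sequentially_Suc[of "\<lambda>r. f (r - 1)"] by simp

lemma pmf_sums_1: "pmf (p :: nat pmf) sums 1"
  using sums_integral_count_space_nat[OF integrable_pmf] by (simp add: integral_pmf)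

locale unbounded_offspring =
  fixes p :: "nat pmf"
  assumes integrable_mean: "integrable (measure_pmf p) real"
    and unbounded_support: "infinite {r. 0 < pmf p r}"
begin

definition mean :: real where
  "mean = measure_pmf.expectation p real"

definition tail :: "nat \<Rightarrow> real" where
  "tail r = measure_pmf.prob p {r<..}"

definition truncated_mean :: "nat \<Rightarrow> real" where
  "truncated_mean r = (\<Sum>k\<le>r. real k * pmf p k)"

definition expected_vertices_upto :: "nat \<Rightarrow> real" where
  "expected_vertices_upto n = (\<Sum>i\<le>n. mean ^ i)"

lemma mean_sums: "(\<lambda>k. real k * pmf p k) sums mean"
proof -
  have "integrable (count_space UNIV) (\<lambda>k. pmf p k *\<^sub>R real k)"
    using integrable_mean by (simp add: measure_pmf_eq_density integrable_density)
  moreover have "mean = integral\<^sup>L (count_space UNIV) (\<lambda>k. pmf p k *\<^sub>R real k)"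
    by (simp add: mean_def measure_pmf_eq_density integral_density)
  ultimately show ?thesis
    using sums_integral_count_space_nat by (simp add: mult.commute)
qed

lemma tail_eq: "tail r = 1 - (\<Sum>k\<le>r. pmf p k)"
proof -
  have "tail r = 1 - measure_pmf.prob p {..r}"
    using measure_pmf.prob_compl[of "{..r}" p] by (simp add: tail_def Compl_eq_Diff_UNIV[symmetric] Compl_atMost)
  then show ?thesis by (simp add: measure_measure_pmf_finite)
qed

lemma tail_pos: "0 < tail r"
proof -
  obtain k where k: "r < k" "0 < pmf p k"
    using unbounded_support unfolding infinite_nat_iff_unbounded by auto
  then have "pmf p k \<le> tail r"
    unfolding tail_def measure_pmf_single[symmetric]
    by (intro measure_pmf.finite_measure_mono) auto
  with k show ?thesis by simp
qed

lemma truncated_mean_nonneg: "0 \<le> truncated_mean r"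
  by (simp add: truncated_mean_def sum_nonneg)

lemma tendsto_truncated_mean: "truncated_mean \<longlonglongrightarrow> mean"
  using mean_sums unfolding sums_def truncated_mean_def by (simp add: LIMSEQ_lessThan_iff_atMost)

lemma truncated_mean_le_mean: "truncated_mean r \<le> mean"
proof (rule incseq_le[OF _ tendsto_truncated_mean])
  show "incseq truncated_mean"
    by (auto simp: incseq_def truncated_mean_def intro!: sum_mono2)
qed

lemma mean_nonneg: "0 \<le> mean"
  using truncated_mean_nonneg truncated_mean_le_mean order_trans by blast

lemma sum_square_pmf_le: "(\<Sum>k\<le>r. (real k)\<^sup>2 * pmf p k) \<le> real r * truncated_mean r"
  unfolding truncated_mean_def sum_distrib_left
  by (intro sum_mono) (auto simp: power2_eq_square mult.assoc intro!: mult_right_mono)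

lemma times_tail_le: "real r * tail r \<le> mean - truncated_mean r"
proof -
  have tail_sums: "(\<lambda>j. pmf p (j + Suc r)) sums tail r"
    using sums_split_initial_segment[OF pmf_sums_1[of p], of "Suc r"]
    by (simp add: tail_eq lessThan_Suc_atMost)
  have upper: "(\<lambda>j. real (j + Suc r) * pmf p (j + Suc r)) sums (mean - truncated_mean r)"
    using sums_split_initial_segment[OF mean_sums, of "Suc r"]
    by (simp add: truncated_mean_def lessThan_Suc_atMost)
  show ?thesis
    by (rule sums_le[OF _ sums_mult[OF tail_sums] upper]) (simp add: mult_right_mono)
qed

lemma tendsto_times_tail: "(\<lambda>r. real r * tail r) \<longlonglongrightarrow> 0"
proof (rule real_tendsto_sandwich)
  show "\<forall>\<^sub>F r in sequentially. 0 \<le> real r * tail r"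
    using tail_pos by (simp add: less_imp_le)
  show "\<forall>\<^sub>F r in sequentially. real r * tail r \<le> mean - truncated_mean r"
    using times_tail_le by simp
  show "(\<lambda>r. mean - truncated_mean r) \<longlonglongrightarrow> 0"
    using tendsto_diff[OF tendsto_const[of mean] tendsto_truncated_mean] by simp
qed simp

lemma sum_pmf_power_diff_bounds:
  assumes "0 \<le> y" "y \<le> x" "x \<le> 1"
  shows "(x - y) * (truncated_mean s - real s * (1 - y) * mean) \<le> (\<Sum>k\<le>s. pmf p k * (x ^ k - y ^ k))"
    and "(\<Sum>k\<le>s. pmf p k * (x ^ k - y ^ k)) \<le> (x - y) * truncated_mean s"
proof -
  have "(\<Sum>k\<le>s. pmf p k * (x ^ k - y ^ k)) \<le> (\<Sum>k\<le>s. pmf p k * (real k * (x - y)))"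
    using assms by (intro sum_mono mult_left_mono power_diff_le) auto
  then show "(\<Sum>k\<le>s. pmf p k * (x ^ k - y ^ k)) \<le> (x - y) * truncated_mean s"
    by (simp add: truncated_mean_def sum_distrib_left mult_ac)
  have second_moment: "(\<Sum>k\<le>s. (real k)\<^sup>2 * pmf p k) \<le> real s * mean"
    using sum_square_pmf_le[of s] mult_left_mono[OF truncated_mean_le_mean[of s], of "real s"]
    by simp
  have "(x - y) * (truncated_mean s - real s * (1 - y) * mean) =
      (x - y) * truncated_mean s - (x - y) * (1 - y) * (real s * mean)"
    by (simp add: algebra_simps)
  also have "\<dots> \<le> (x - y) * truncated_mean s - (x - y) * (1 - y) * (\<Sum>k\<le>s. (real k)\<^sup>2 * pmf p k)"
    using assms second_moment by (intro diff_left_mono mult_left_mono) auto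
  also have "\<dots> = (\<Sum>k\<le>s. pmf p k * (real k * (1 - real k * (1 - y)) * (x - y)))"
    unfolding truncated_mean_def sum_distrib_left sum_subtractf[symmetric]
    by (intro sum.cong) (simp_all add: algebra_simps power2_eq_square)
  also have "\<dots> \<le> (\<Sum>k\<le>s. pmf p k * (x ^ k - y ^ k))"
    using assms by (intro sum_mono mult_left_mono power_diff_ge) auto
  finally show "(x - y) * (truncated_mean s - real s * (1 - y) * mean) \<le> (\<Sum>k\<le>s. pmf p k * (x ^ k - y ^ k))" .
qed

lemma expected_vertices_upto_Suc: "expected_vertices_upto (Suc n) = 1 + expected_vertices_upto n * mean"
  unfolding expected_vertices_upto_def
  by (simp only: sum.atMost_Suc_shift power_0 power_Suc2 sum_distrib_right)

lemma expected_vertices_upto_ge_1: "1 \<le> expected_vertices_upto n"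
  unfolding expected_vertices_upto_def
  using sum_mono2[of "{..n}" "{0}" "\<lambda>i. mean ^ i"] mean_nonneg by simp

lemma tail_ratio_Suc_bounds:
  fixes n r :: nat
  defines "R \<equiv> (1 - maxdeg_upto_cdf p n r) / tail r"
  shows "1 + R * (truncated_mean r - real r * tail r * R * mean) \<le> (1 - maxdeg_upto_cdf p (Suc n) r) / tail r"
    and "(1 - maxdeg_upto_cdf p (Suc n) r) / tail r \<le> 1 + R * truncated_mean r"
proof -
  define b where "b = 1 - maxdeg_upto_cdf p n r"
  define X where "X = (\<Sum>k\<le>r. pmf p k * (1 ^ k - (1 - b) ^ k))"
  have b: "0 \<le> 1 - b" "1 - b \<le> 1"
    by (simp_all add: b_def maxdeg_upto_cdf_nonneg maxdeg_upto_cdf_le_1)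
  have "1 - maxdeg_upto_cdf p (Suc n) r = tail r + X"
    by (simp add: maxdeg_upto_cdf_Suc tail_eq X_def b_def right_diff_distrib sum_subtractf)
  then have ratio: "(1 - maxdeg_upto_cdf p (Suc n) r) / tail r = 1 + X / tail r"
    using tail_pos[of r] by (simp add: field_simps)
  have "R * (truncated_mean r - real r * tail r * R * mean) = b * (truncated_mean r - real r * b * mean) / tail r"
    using tail_pos[of r] by (simp add: R_def b_def field_simps)
  also have "\<dots> \<le> X / tail r"
    using sum_pmf_power_diff_bounds(1)[OF b, of r] tail_pos[of r]
    by (intro divide_right_mono) (simp_all add: X_def)
  finally show "1 + R * (truncated_mean r - real r * tail r * R * mean) \<le> (1 - maxdeg_upto_cdf p (Suc n) r) / tail r"
    by (simp add: ratio)
  have "X / tail r \<le> b * truncated_mean r / tail r"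
    using sum_pmf_power_diff_bounds(2)[OF b, of r] tail_pos[of r]
    by (intro divide_right_mono) (simp_all add: X_def)
  then show "(1 - maxdeg_upto_cdf p (Suc n) r) / tail r \<le> 1 + R * truncated_mean r"
    by (simp add: ratio R_def b_def)
qed

lemma tendsto_tail_ratio:
  "((\<lambda>r. (1 - maxdeg_upto_cdf p n r) / tail r) \<longlongrightarrow> expected_vertices_upto n) at_top"
    (is "(?ratio n \<longlongrightarrow> _) _")
proof (induction n)
  case 0
  have "?ratio 0 = (\<lambda>_. 1)"
    using tail_pos by (auto simp: maxdeg_upto_cdf_0 tail_eq less_imp_neq[symmetric])
  then show ?case by (simp add: expected_vertices_upto_def)
next
  case (Suc n)
  show ?case
  proof (rule real_tendsto_sandwich)
    show "\<forall>\<^sub>F r in sequentially. 1 + ?ratio n r * (truncated_mean r - real r * tail r * ?ratio n r * mean)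
        \<le> ?ratio (Suc n) r"
      using tail_ratio_Suc_bounds(1) by simp
    show "\<forall>\<^sub>F r in sequentially. ?ratio (Suc n) r \<le> 1 + ?ratio n r * truncated_mean r"
      using tail_ratio_Suc_bounds(2) by simp
    show "(\<lambda>r. 1 + ?ratio n r * (truncated_mean r - real r * tail r * ?ratio n r * mean))
        \<longlonglongrightarrow> expected_vertices_upto (Suc n)"
      using tendsto_add[OF tendsto_const[of 1] tendsto_mult[OF Suc tendsto_diff[OF tendsto_truncated_mean
            tendsto_mult[OF tendsto_mult[OF tendsto_times_tail Suc] tendsto_const[of mean]]]]]
      by (simp add: expected_vertices_upto_Suc)
    show "(\<lambda>r. 1 + ?ratio n r * truncated_mean r) \<longlonglongrightarrow> expected_vertices_upto (Suc n)"
      using tendsto_add[OF tendsto_const[of 1] tendsto_mult[OF Suc tendsto_truncated_mean]]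
      by (simp add: expected_vertices_upto_Suc)
  qed
qed

lemma tendsto_times_cdf_complement: "(\<lambda>r. real r * (1 - maxdeg_upto_cdf p n r)) \<longlonglongrightarrow> 0"
proof -
  have "real r * (1 - maxdeg_upto_cdf p n r) = (1 - maxdeg_upto_cdf p n r) / tail r * (real r * tail r)" for r
    using tail_pos[of r] by simp
  then show ?thesis
    using tendsto_mult[OF tendsto_tail_ratio tendsto_times_tail] by simp
qed

lemma point_ratio_Suc_bounds:
  fixes n s :: nat
  defines "x \<equiv> maxdeg_upto_cdf p n (Suc s)" and "y \<equiv> maxdeg_upto_cdf p n s"
  defines "D \<equiv> (x - y) / pmf p (Suc s)"
  assumes pos: "0 < pmf p (Suc s)"
  shows "1 - real (Suc s) * (1 - x) + D * (truncated_mean s - real s * (1 - y) * mean)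
      \<le> (maxdeg_upto_cdf p (Suc n) (Suc s) - maxdeg_upto_cdf p (Suc n) s) / pmf p (Suc s)"
    and "(maxdeg_upto_cdf p (Suc n) (Suc s) - maxdeg_upto_cdf p (Suc n) s) / pmf p (Suc s)
      \<le> 1 + D * truncated_mean s"
proof -
  have xy: "0 \<le> y" "y \<le> x" "x \<le> 1"
    by (simp_all add: x_def y_def maxdeg_upto_cdf_nonneg maxdeg_upto_cdf_le_1 maxdeg_upto_cdf_mono)
  define Y where "Y = (\<Sum>k\<le>s. pmf p k * (x ^ k - y ^ k))"
  have "maxdeg_upto_cdf p (Suc n) (Suc s) - maxdeg_upto_cdf p (Suc n) s = pmf p (Suc s) * x ^ Suc s + Y"
    by (simp add: maxdeg_upto_cdf_Suc x_def y_def Y_def right_diff_distrib sum_subtractf)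
  then have ratio: "(maxdeg_upto_cdf p (Suc n) (Suc s) - maxdeg_upto_cdf p (Suc n) s) / pmf p (Suc s)
      = x ^ Suc s + Y / pmf p (Suc s)"
    using pos by (simp add: field_simps)
  have "1 - x ^ Suc s \<le> real (Suc s) * (1 - x)"
    using power_diff_le[of x 1 "Suc s"] xy by simp
  moreover have "x ^ Suc s \<le> 1"
    by (rule power_le_one) (use xy in auto)
  moreover have "D * (truncated_mean s - real s * (1 - y) * mean) \<le> Y / pmf p (Suc s)"
    using divide_right_mono[OF sum_pmf_power_diff_bounds(1)[OF xy, of s], of "pmf p (Suc s)"] pos
    by (simp add: D_def Y_def)
  moreover have "Y / pmf p (Suc s) \<le> D * truncated_mean s"
    using divide_right_mono[OF sum_pmf_power_diff_bounds(2)[OF xy, of s], of "pmf p (Suc s)"] pos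
    by (simp add: D_def Y_def)
  ultimately show "1 - real (Suc s) * (1 - x) + D * (truncated_mean s - real s * (1 - y) * mean)
      \<le> (maxdeg_upto_cdf p (Suc n) (Suc s) - maxdeg_upto_cdf p (Suc n) s) / pmf p (Suc s)"
    and "(maxdeg_upto_cdf p (Suc n) (Suc s) - maxdeg_upto_cdf p (Suc n) s) / pmf p (Suc s)
      \<le> 1 + D * truncated_mean s"
    unfolding ratio by linarith+
qed

lemma tendsto_point_ratio:
  "((\<lambda>r. (maxdeg_upto_cdf p n r - maxdeg_upto_cdf p n (r - 1)) / pmf p r) \<longlongrightarrow> expected_vertices_upto n)
    (inf at_top (principal {r. 0 < pmf p r}))" (is "(?ratio n \<longlongrightarrow> _) ?F")
proof -
  have eventually_Suc: "\<forall>\<^sub>F r in ?F. \<exists>s. r = Suc s \<and> 0 < pmf p (Suc s)"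
    unfolding eventually_inf_principal
    by (rule eventually_mono[OF eventually_gt_at_top[of 0]]) (auto simp: gr0_conv_Suc)
  have from_seq: "(f \<longlongrightarrow> l) ?F" if "f \<longlonglongrightarrow> l" for f :: "nat \<Rightarrow> real" and l
    using that by (rule tendsto_mono[OF inf_le1])
  show ?thesis
  proof (induction n)
    case 0
    have "\<forall>\<^sub>F r in ?F. ?ratio 0 r = 1"
      using eventually_Suc by eventually_elim (auto simp: maxdeg_upto_cdf_0)
    then show ?case
      by (simp add: expected_vertices_upto_def tendsto_eventually)
  next
    case (Suc n)
    let ?cdf = "maxdeg_upto_cdf p n"
    have pred: "(\<lambda>r. truncated_mean (r - 1)) \<longlonglongrightarrow> mean"
      "(\<lambda>r. real (r - 1) * (1 - ?cdf (r - 1))) \<longlonglongrightarrow> 0"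
      using filterlim_sequentially_pred[where f = truncated_mean] tendsto_truncated_mean
        filterlim_sequentially_pred[where f = "\<lambda>r. real r * (1 - ?cdf r)"] tendsto_times_cdf_complement
      by blast+
    show ?case
    proof (rule real_tendsto_sandwich)
      show "\<forall>\<^sub>F r in ?F. 1 - real r * (1 - ?cdf r)
          + ?ratio n r * (truncated_mean (r - 1) - real (r - 1) * (1 - ?cdf (r - 1)) * mean) \<le> ?ratio (Suc n) r"
        using eventually_Suc by eventually_elim (auto dest: point_ratio_Suc_bounds(1))
      show "\<forall>\<^sub>F r in ?F. ?ratio (Suc n) r \<le> 1 + ?ratio n r * truncated_mean (r - 1)"
        using eventually_Suc by eventually_elim (auto dest: point_ratio_Suc_bounds(2))
      show "((\<lambda>r. 1 - real r * (1 - ?cdf r)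
          + ?ratio n r * (truncated_mean (r - 1) - real (r - 1) * (1 - ?cdf (r - 1)) * mean))
          \<longlongrightarrow> expected_vertices_upto (Suc n)) ?F"
        using tendsto_add[OF tendsto_diff[OF tendsto_const[of 1] from_seq[OF tendsto_times_cdf_complement]]
            tendsto_mult[OF Suc tendsto_diff[OF from_seq[OF pred(1)]
              tendsto_mult[OF from_seq[OF pred(2)] tendsto_const[of mean]]]]]
        by (simp add: expected_vertices_upto_Suc)
      show "((\<lambda>r. 1 + ?ratio n r * truncated_mean (r - 1)) \<longlongrightarrow> expected_vertices_upto (Suc n)) ?F"
        using tendsto_add[OF tendsto_const[of 1] tendsto_mult[OF Suc from_seq[OF pred(1)]]]
        by (simp add: expected_vertices_upto_Suc)
    qed
  qed
qed


lemma asymp_equiv_prob_maxdeg_upto_eq: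
  "(\<lambda>r. measure (GW p) {\<omega>. maxdeg_upto \<omega> n = r})
    \<sim>[inf at_top (principal {r. 0 < pmf p r})] (\<lambda>r. expected_vertices_upto n * pmf p r)"
proof (rule asymp_equivI')
  have nonzero: "expected_vertices_upto n \<noteq> 0"
    using expected_vertices_upto_ge_1[of n] by linarith
  have "((\<lambda>r. (maxdeg_upto_cdf p n r - maxdeg_upto_cdf p n (r - 1)) / pmf p r / expected_vertices_upto n)
      \<longlongrightarrow> 1) (inf at_top (principal {r. 0 < pmf p r}))"
    using tendsto_divide[OF tendsto_point_ratio[of n] tendsto_const[of "expected_vertices_upto n"]] nonzero
    by simp
  moreover have "\<forall>\<^sub>F r in inf at_top (principal {r. 0 < pmf p r}).
      (maxdeg_upto_cdf p n r - maxdeg_upto_cdf p n (r - 1)) / pmf p r / expected_vertices_upto n =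
      measure (GW p) {\<omega>. maxdeg_upto \<omega> n = r} / (expected_vertices_upto n * pmf p r)"
    unfolding eventually_inf_principal
    by (rule eventually_mono[OF eventually_gt_at_top[of 0]])
      (auto simp: gr0_conv_Suc prob_maxdeg_upto_eq mult.commute)
  ultimately show "((\<lambda>r. measure (GW p) {\<omega>. maxdeg_upto \<omega> n = r} / (expected_vertices_upto n * pmf p r))
      \<longlongrightarrow> 1) (inf at_top (principal {r. 0 < pmf p r}))"
    by (rule Lim_transform_eventually)
qed

lemma asymp_equiv_prob_maxdeg_upto_gt:
  "(\<lambda>r. measure (GW p) {\<omega>. r < maxdeg_upto \<omega> n}) \<sim>[at_top] (\<lambda>r. expected_vertices_upto n * tail r)"
proof (rule asymp_equivI')
  have "expected_vertices_upto n \<noteq> 0"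
    using expected_vertices_upto_ge_1[of n] by linarith
  then have "((\<lambda>r. (1 - maxdeg_upto_cdf p n r) / tail r / expected_vertices_upto n) \<longlongrightarrow> 1) at_top"
    using tendsto_divide[OF tendsto_tail_ratio[of n] tendsto_const[of "expected_vertices_upto n"]]
    by simp
  then show "((\<lambda>r. measure (GW p) {\<omega>. r < maxdeg_upto \<omega> n} / (expected_vertices_upto n * tail r))
      \<longlongrightarrow> 1) at_top"
    by (simp add: prob_maxdeg_upto_gt mult.commute)
qed

end

theorem theorem2p3:
  fixes p :: "nat pmf" and n :: nat
  assumes mean_finite: "integrable (measure_pmf p) real"
    and mean_pos: "measure_pmf.expectation p real > 0"
    and unbounded: "infinite {r. pmf p r > 0}"
  shows "((\<lambda>r. measure (GW p) {\<omega> \<in> space (GW p). maxdeg_upto \<omega> n = r})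
           \<sim>[inf at_top (principal {r. pmf p r > 0})]
         (\<lambda>r. (\<Sum>i\<le>n. (measure_pmf.expectation p real) ^ i) * pmf p r)) \<and>
         ((\<lambda>r. measure (GW p) {\<omega> \<in> space (GW p). maxdeg_upto \<omega> n > r})
           \<sim>[at_top]
         (\<lambda>r. (\<Sum>i\<le>n. (measure_pmf.expectation p real) ^ i) * measure_pmf.prob p {r<..}))"
proof -
  interpret unbounded_offspring p
    using mean_finite unbounded by unfold_locales
  have "(\<Sum>i\<le>n. (measure_pmf.expectation p real) ^ i) = expected_vertices_upto n"
    by (simp add: expected_vertices_upto_def mean_def)
  then show ?thesis
    using asymp_equiv_prob_maxdeg_upto_eq[of n] asymp_equiv_prob_maxdeg_upto_gt[of n]
    by (simp add: tail_def)
qed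

end
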